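(* Let $\mathbf A$ be a finite subdirectly irreducible cBCK-algebra which is not a chain, let $\mathcal K$ be a cover of $\mathcal V(\mathbf A)$ in the lattice of varieties of cBCK-algebras, and let $\mathbf B$ be a subdirectly irreducible member of $\mathcal K$. Then $|\mathrm{m}(\mathbf B)|\le|\mathrm{m}(\mathbf A)|+1$.
   Context: A BCK-algebra is an algebra $(A,\ominus,0)$ of type $(2,0)$ satisfying $((x\ominus y)\ominus(x\ominus z))\ominus(z\ominus y)=0$, $x\ominus 0=x$, $0\ominus x=0$, and ($x\ominus y=0$ and $y\ominus x=0$ imply $x=y$); it is ordered by $x\le y$ iff $x\ominus y=0$. A cBCK-algebra is a BCK-algebra satisfying $x\ominus(x\ominus y)=y\ominus(y\ominus x)$; cBCK-algebras form a variety. $\mathrm{m}(\mathbf B)$ denotes the set of maximal elements of $\mathbf B$. $\mathcal V(\mathbf A)$ is the variety generated by $\mathbf A$. A cover of a variety $\mathcal V$ is a variety $\mathcal K\supsetneq\mathcal V$ such that no variety lies strictly between $\mathcal V$ and $\mathcal K$. *)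

theory Defs
  imports Main
begin

record 'a alg =
  acarr  :: "'a set"
  aminus :: "'a \<Rightarrow> 'a \<Rightarrow> 'a"
  azero  :: "'a"

definition is_alg :: "'a alg \<Rightarrow> bool" where
  "is_alg X \<longleftrightarrow> azero X \<in> acarr X \<and>
     (\<forall>x\<in>acarr X. \<forall>y\<in>acarr X. aminus X x y \<in> acarr X)"

definition ale :: "'a alg \<Rightarrow> 'a \<Rightarrow> 'a \<Rightarrow> bool" where
  "ale X x y \<longleftrightarrow> aminus X x y = azero X"

definition is_BCK :: "'a alg \<Rightarrow> bool" where
  "is_BCK X \<longleftrightarrow> is_alg X \<and>
    (\<forall>x\<in>acarr X. \<forall>y\<in>acarr X. \<forall>z\<in>acarr X.
       aminus X (aminus X (aminus X x y) (aminus X x z)) (aminus X z y) = azero X) \<and>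
    (\<forall>x\<in>acarr X. aminus X x (azero X) = x) \<and>
    (\<forall>x\<in>acarr X. aminus X (azero X) x = azero X) \<and>
    (\<forall>x\<in>acarr X. \<forall>y\<in>acarr X.
       aminus X x y = azero X \<longrightarrow> aminus X y x = azero X \<longrightarrow> x = y)"

definition is_cBCK :: "'a alg \<Rightarrow> bool" where
  "is_cBCK X \<longleftrightarrow> is_BCK X \<and>
    (\<forall>x\<in>acarr X. \<forall>y\<in>acarr X.
       aminus X x (aminus X x y) = aminus X y (aminus X y x))"

definition maxel :: "'a alg \<Rightarrow> 'a set" where
  "maxel X = {x \<in> acarr X. \<forall>y\<in>acarr X. ale X x y \<longrightarrow> y = x}"

definition is_chain :: "'a alg \<Rightarrow> bool" where
  "is_chain X \<longleftrightarrow> (\<forall>x\<in>acarr X. \<forall>y\<in>acarr X. ale X x y \<or> ale X y x)"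

definition is_cong :: "'a alg \<Rightarrow> ('a \<times> 'a) set \<Rightarrow> bool" where
  "is_cong X \<theta> \<longleftrightarrow> equiv (acarr X) \<theta> \<and>
     (\<forall>a b c d. (a, b) \<in> \<theta> \<longrightarrow> (c, d) \<in> \<theta> \<longrightarrow>
        (aminus X a c, aminus X b d) \<in> \<theta>)"

definition subdir_irr :: "'a alg \<Rightarrow> bool" where
  "subdir_irr X \<longleftrightarrow> (\<exists>a\<in>acarr X. \<exists>b\<in>acarr X. a \<noteq> b \<and>
     (\<forall>\<theta>. is_cong X \<theta> \<and> \<theta> \<noteq> Id_on (acarr X) \<longrightarrow> (a, b) \<in> \<theta>))"

datatype trm = Var nat | Zero | Minus trm trm

fun eval :: "'a alg \<Rightarrow> (nat \<Rightarrow> 'a) \<Rightarrow> trm \<Rightarrow> 'a" where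
  "eval X v (Var i) = v i"
| "eval X v Zero = azero X"
| "eval X v (Minus s t) = aminus X (eval X v s) (eval X v t)"

type_synonym ident = "trm \<times> trm"

definition sat_id :: "'a alg \<Rightarrow> ident \<Rightarrow> bool" where
  "sat_id X e \<longleftrightarrow> (\<forall>v. (\<forall>i. v i \<in> acarr X) \<longrightarrow> eval X v (fst e) = eval X v (snd e))"

definition in_var :: "'a alg \<Rightarrow> ident set \<Rightarrow> bool" where
  "in_var X \<Sigma> \<longleftrightarrow> is_alg X \<and> (\<forall>e\<in>\<Sigma>. sat_id X e)"

text \<open>Identities of an algebra; by Birkhoff's HSP theorem, V(A) = Mod(Id(A)).\<close>
definition Id_alg :: "'a alg \<Rightarrow> ident set" where
  "Id_alg A = {e. sat_id A e}"

text \<open>It is tested on algebras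
  whose universe lies in the countable type nat; this is equivalent to testing
  all algebras, since the countably generated free algebras of Mod(\<Sigma>1) are
  countable and determine its equational theory.\<close>
definition var_le :: "ident set \<Rightarrow> ident set \<Rightarrow> bool" where
  "var_le \<Sigma>1 \<Sigma>2 \<longleftrightarrow> (\<forall>X :: nat alg. in_var X \<Sigma>1 \<longrightarrow> in_var X \<Sigma>2)"

definition var_less :: "ident set \<Rightarrow> ident set \<Rightarrow> bool" where
  "var_less \<Sigma>1 \<Sigma>2 \<longleftrightarrow> var_le \<Sigma>1 \<Sigma>2 \<and> \<not> var_le \<Sigma>2 \<Sigma>1"

text \<open>Mod(\<Sigma>) is a variety of cBCK-algebras (again tested on countable algebras;
  a failure of a cBCK axiom is witnessed in a countable subalgebra).\<close>
definition cBCK_variety :: "ident set \<Rightarrow> bool" where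
  "cBCK_variety \<Sigma> \<longleftrightarrow> (\<forall>X :: nat alg. in_var X \<Sigma> \<longrightarrow> is_cBCK X)"

definition is_cover :: "ident set \<Rightarrow> ident set \<Rightarrow> bool" where
  "is_cover \<Sigma>K \<Sigma>V \<longleftrightarrow> cBCK_variety \<Sigma>K \<and> var_less \<Sigma>V \<Sigma>K \<and>
     \<not> (\<exists>\<Sigma>. var_less \<Sigma>V \<Sigma> \<and> var_less \<Sigma> \<Sigma>K)"

end

theory Submission
  imports Defs "HOL-Library.Countable_Set"
begin

(* Let tau_k (width_ident k) be the identity saying that the meet of all differences x_i - x_j,
   i ~= j <= k, is 0.  It holds in every cBCK-algebra whose elements all lie below at most k
   maximal elements: two of the x_i lie below a common maximal element m, and for a, b <= m the
   differences a - b and b - a are disjoint.  It fails in a subdirectly irreducible cBCK-algebra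
   with k + 1 maximal elements, because there two nonzero elements have a nonzero meet.
   Let n = |m(A)|, so A satisfies tau_n.  If B had n + 2 maximal elements, the subalgebras of B
   generated by n + 1 and by n + 2 of them would show that the subvariety of K defined by
   tau_(n+1) lies strictly between V(A) and K. *)

locale cBCK_alg =
  fixes X :: "'a alg"
  assumes cBCK: "is_cBCK X"
begin

abbreviation diff (infixl \<open>\<ominus>\<close> 65) where "x \<ominus> y \<equiv> aminus X x y"
abbreviation zero (\<open>\<zero>\<close>) where "\<zero> \<equiv> azero X"
abbreviation le (infix \<open>\<preceq>\<close> 50) where "x \<preceq> y \<equiv> x \<ominus> y = \<zero>"
abbreviation meet where "meet x y \<equiv> x \<ominus> (x \<ominus> y)"

lemma diff_closed [simp]: "x \<in> acarr X \<Longrightarrow> y \<in> acarr X \<Longrightarrow> x \<ominus> y \<in> acarr X"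
  using cBCK by (simp add: is_cBCK_def is_BCK_def is_alg_def)

lemma zero_closed [simp]: "\<zero> \<in> acarr X"
  using cBCK by (simp add: is_cBCK_def is_BCK_def is_alg_def)

lemma diff_diff_le:
  "x \<in> acarr X \<Longrightarrow> y \<in> acarr X \<Longrightarrow> z \<in> acarr X \<Longrightarrow> (x \<ominus> y) \<ominus> (x \<ominus> z) \<preceq> z \<ominus> y"
  using cBCK by (simp add: is_cBCK_def is_BCK_def)

lemma diff_zero [simp]: "x \<in> acarr X \<Longrightarrow> x \<ominus> \<zero> = x"
  using cBCK by (simp add: is_cBCK_def is_BCK_def)

lemma zero_diff [simp]: "x \<in> acarr X \<Longrightarrow> \<zero> \<ominus> x = \<zero>"
  using cBCK by (simp add: is_cBCK_def is_BCK_def)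

lemma le_antisym: "x \<in> acarr X \<Longrightarrow> y \<in> acarr X \<Longrightarrow> x \<preceq> y \<Longrightarrow> y \<preceq> x \<Longrightarrow> x = y"
  using cBCK by (simp add: is_cBCK_def is_BCK_def)

lemma meet_commute: "x \<in> acarr X \<Longrightarrow> y \<in> acarr X \<Longrightarrow> meet x y = meet y x"
  using cBCK by (simp add: is_cBCK_def)

lemma ale_iff [simp]: "ale X x y \<longleftrightarrow> x \<preceq> y"
  by (simp add: ale_def)

lemma diff_self [simp]: "x \<in> acarr X \<Longrightarrow> x \<ominus> x = \<zero>"
  using diff_diff_le[of x \<zero> \<zero>] by simp

lemma diff_le_self [simp]: "x \<in> acarr X \<Longrightarrow> y \<in> acarr X \<Longrightarrow> x \<ominus> y \<preceq> x"
  using diff_diff_le[of x y \<zero>] by simp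

lemma meet_le_right [simp]: "x \<in> acarr X \<Longrightarrow> y \<in> acarr X \<Longrightarrow> meet x y \<preceq> y"
  using diff_diff_le[of x \<zero> y] by simp

lemma le_trans:
  "x \<in> acarr X \<Longrightarrow> y \<in> acarr X \<Longrightarrow> z \<in> acarr X \<Longrightarrow> x \<preceq> y \<Longrightarrow> y \<preceq> z \<Longrightarrow> x \<preceq> z"
  using diff_diff_le[of x z y] by simp

lemma diff_antimono:
  "x \<in> acarr X \<Longrightarrow> y \<in> acarr X \<Longrightarrow> z \<in> acarr X \<Longrightarrow> x \<preceq> y \<Longrightarrow> z \<ominus> y \<preceq> z \<ominus> x"
  using diff_diff_le[of z y x] by simp

lemma diff_right_commute:
  assumes "x \<in> acarr X" "y \<in> acarr X" "z \<in> acarr X"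
  shows "x \<ominus> y \<ominus> z = x \<ominus> z \<ominus> y"
proof -
  have le: "a \<ominus> b \<ominus> c \<preceq> a \<ominus> c \<ominus> b" if "a \<in> acarr X" "b \<in> acarr X" "c \<in> acarr X" for a b c
  proof (rule le_trans)
    show "a \<ominus> b \<ominus> c \<preceq> a \<ominus> b \<ominus> meet a c"
      by (rule diff_antimono) (use that in auto)
    show "a \<ominus> b \<ominus> meet a c \<preceq> a \<ominus> c \<ominus> b"
      by (rule diff_diff_le) (use that in auto)
  qed (use that in auto)
  show ?thesis by (rule le_antisym) (use assms le in auto)
qed

lemma diff_diff_le_diff:
  "x \<in> acarr X \<Longrightarrow> y \<in> acarr X \<Longrightarrow> z \<in> acarr X \<Longrightarrow> (x \<ominus> z) \<ominus> (y \<ominus> z) \<preceq> x \<ominus> y"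
  using diff_right_commute[of "x \<ominus> z" "y \<ominus> z" "x \<ominus> y"] diff_diff_le[of x z y] by simp

lemma diff_mono:
  "x \<in> acarr X \<Longrightarrow> y \<in> acarr X \<Longrightarrow> z \<in> acarr X \<Longrightarrow> x \<preceq> y \<Longrightarrow> x \<ominus> z \<preceq> y \<ominus> z"
  using diff_diff_le_diff[of x y z] by simp

lemma meet_eq_if_le: "x \<in> acarr X \<Longrightarrow> y \<in> acarr X \<Longrightarrow> x \<preceq> y \<Longrightarrow> meet y x = x"
  using meet_commute[of y x] by simp

lemma meet_greatest:
  assumes "c \<in> acarr X" "x \<in> acarr X" "y \<in> acarr X" "c \<preceq> x" "c \<preceq> y"
  shows "c \<preceq> meet x y"
proof -
  have "meet x c \<preceq> meet x y"
    using diff_antimono[of "x \<ominus> y" "x \<ominus> c" x] diff_antimono[of c y x] assms by simp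
  thus ?thesis using meet_eq_if_le[of c x] assms by simp
qed

lemma le_zero_if_le_disjoint:
  "c \<in> acarr X \<Longrightarrow> x \<in> acarr X \<Longrightarrow> y \<in> acarr X \<Longrightarrow> c \<preceq> x \<Longrightarrow> c \<preceq> y \<Longrightarrow> meet x y = \<zero> \<Longrightarrow> c = \<zero>"
  using meet_greatest[of c x y] by simp

lemma diff_eq_self_if_disjoint: "x \<in> acarr X \<Longrightarrow> y \<in> acarr X \<Longrightarrow> meet x y = \<zero> \<Longrightarrow> x \<ominus> y = x"
  by (rule le_antisym) simp_all

lemma meet_diff_self: "x \<in> acarr X \<Longrightarrow> y \<in> acarr X \<Longrightarrow> meet x (x \<ominus> y) = x \<ominus> y"
  using meet_eq_if_le[of "x \<ominus> y" x] by simp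

lemma diff_split:
  assumes "a \<in> acarr X" "b \<in> acarr X" "m \<in> acarr X" "a \<preceq> m"
  shows "m \<ominus> a = m \<ominus> (a \<ominus> b) \<ominus> meet b a"
proof -
  define p q where "p = m \<ominus> a" and "q = m \<ominus> (a \<ominus> b)"
  have pq: "p \<in> acarr X" "q \<in> acarr X" "p \<preceq> q"
    using diff_antimono[of "a \<ominus> b" a m] assms by (simp_all add: p_def q_def)
  have "q \<ominus> p = meet m a \<ominus> (a \<ominus> b)"
    using diff_right_commute[of m "a \<ominus> b" "m \<ominus> a"] assms by (simp add: p_def q_def)
  also have "\<dots> = meet b a"
    using meet_eq_if_le[of a m] meet_commute[of a b] assms by simp
  finally have "q \<ominus> p = meet b a" .
  moreover have "p = meet q p"
    using meet_eq_if_le[of p q] pq by simp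
  ultimately show ?thesis by (simp add: p_def q_def)
qed

lemma diff_diff_swap_below:
  assumes "a \<in> acarr X" "b \<in> acarr X" "m \<in> acarr X" "a \<preceq> m" "b \<preceq> m"
  shows "b \<ominus> a \<ominus> (a \<ominus> b) = b \<ominus> a"
proof -
  have "b \<ominus> a = meet m b \<ominus> a"
    using meet_eq_if_le[of b m] assms by simp
  also have "\<dots> = m \<ominus> a \<ominus> (m \<ominus> b)"
    using diff_right_commute assms by simp
  also have "\<dots> = m \<ominus> (a \<ominus> b) \<ominus> meet b a \<ominus> (m \<ominus> b)"
    using diff_split[of a b m] assms by simp
  also have "\<dots> = meet m b \<ominus> (a \<ominus> b) \<ominus> meet b a"
    using diff_right_commute assms by simp
  also have "\<dots> = b \<ominus> meet b a \<ominus> (a \<ominus> b)"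
    using meet_eq_if_le[of b m] diff_right_commute assms by simp
  also have "\<dots> = b \<ominus> a \<ominus> (a \<ominus> b)"
    using meet_diff_self[of b a] assms by simp
  finally show ?thesis by simp
qed

lemma meet_diffs_below:
  assumes "a \<in> acarr X" "b \<in> acarr X" "m \<in> acarr X" "a \<preceq> m" "b \<preceq> m"
  shows "meet (a \<ominus> b) (b \<ominus> a) = \<zero>"
  using meet_commute[of "a \<ominus> b" "b \<ominus> a"] diff_diff_swap_below[OF assms] assms by simp

definition ideal :: "'a set \<Rightarrow> bool" where
  "ideal I \<longleftrightarrow> \<zero> \<in> I \<and> I \<subseteq> acarr X \<and> (\<forall>x\<in>acarr X. \<forall>y\<in>I. x \<ominus> y \<in> I \<longrightarrow> x \<in> I)"

definition ideal_cong :: "'a set \<Rightarrow> ('a \<times> 'a) set" where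
  "ideal_cong I = {(x, y). x \<in> acarr X \<and> y \<in> acarr X \<and> x \<ominus> y \<in> I \<and> y \<ominus> x \<in> I}"

definition annihilator :: "'a set \<Rightarrow> 'a set" where
  "annihilator S = {u \<in> acarr X. \<forall>s\<in>S. meet u s = \<zero>}"

lemma ideal_down_closed: "ideal I \<Longrightarrow> x \<in> acarr X \<Longrightarrow> y \<in> I \<Longrightarrow> x \<preceq> y \<Longrightarrow> x \<in> I"
  unfolding ideal_def by metis

lemma is_cong_ideal_cong:
  assumes I: "ideal I"
  shows "is_cong X (ideal_cong I)"
proof -
  have zero_I: "\<zero> \<in> I"
    and closed_I: "\<And>x y. x \<in> acarr X \<Longrightarrow> y \<in> I \<Longrightarrow> x \<ominus> y \<in> I \<Longrightarrow> x \<in> I"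
    using I unfolding ideal_def by auto
  have trans_I: "x \<ominus> z \<in> I"
    if "x \<in> acarr X" "y \<in> acarr X" "z \<in> acarr X" "x \<ominus> y \<in> I" "y \<ominus> z \<in> I" for x y z
  proof -
    have "x \<ominus> z \<ominus> (x \<ominus> y) \<in> I"
      by (rule ideal_down_closed[OF I _ that(5)]) (use that diff_diff_le[of x z y] in auto)
    thus ?thesis using closed_I[of "x \<ominus> z" "x \<ominus> y"] that by simp
  qed
  have "equiv (acarr X) (ideal_cong I)"
    unfolding equiv_def refl_on_def sym_def trans_def ideal_cong_def using zero_I trans_I by auto
  moreover have "(a \<ominus> c, b \<ominus> d) \<in> ideal_cong I"
    if "(a, b) \<in> ideal_cong I" "(c, d) \<in> ideal_cong I" for a b c d
  proof -
    have h: "a \<in> acarr X" "b \<in> acarr X" "c \<in> acarr X" "d \<in> acarr X"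
      "a \<ominus> b \<in> I" "b \<ominus> a \<in> I" "c \<ominus> d \<in> I" "d \<ominus> c \<in> I"
      using that by (auto simp: ideal_cong_def)
    have "a \<ominus> c \<ominus> (b \<ominus> c) \<in> I" "b \<ominus> c \<ominus> (a \<ominus> c) \<in> I"
      using ideal_down_closed[OF I _ h(5)] ideal_down_closed[OF I _ h(6)] h diff_diff_le_diff
      by simp_all
    moreover have "b \<ominus> c \<ominus> (b \<ominus> d) \<in> I" "b \<ominus> d \<ominus> (b \<ominus> c) \<in> I"
      using ideal_down_closed[OF I _ h(8)] ideal_down_closed[OF I _ h(7)] h diff_diff_le
      by simp_all
    ultimately show ?thesis
      using trans_I[of "a \<ominus> c" "b \<ominus> c" "b \<ominus> d"] trans_I[of "b \<ominus> d" "b \<ominus> c" "a \<ominus> c"] h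
      by (auto simp: ideal_cong_def)
  qed
  ultimately show ?thesis unfolding is_cong_def by blast
qed

lemma ideal_annihilator:
  assumes "S \<subseteq> acarr X"
  shows "ideal (annihilator S)"
  unfolding ideal_def
proof (intro conjI ballI impI)
  show "\<zero> \<in> annihilator S" "annihilator S \<subseteq> acarr X"
    using assms by (auto simp: annihilator_def)
  fix u w assume u: "u \<in> acarr X" and w: "w \<in> annihilator S" and uw: "u \<ominus> w \<in> annihilator S"
  have wC: "w \<in> acarr X" using w by (simp add: annihilator_def)
  show "u \<in> annihilator S" unfolding annihilator_def
  proof (intro CollectI conjI ballI u)
    fix s assume s: "s \<in> S"
    with assms have sC: "s \<in> acarr X" by auto
    define c where "c = meet u s"
    have c: "c \<in> acarr X" "c \<preceq> u" "c \<preceq> s" using u sC by (simp_all add: c_def)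
    have "meet c w = \<zero>"
    proof (rule le_zero_if_le_disjoint[of _ w s])
      show "meet c w \<preceq> s" by (rule le_trans[of _ c]) (use c wC sC in auto)
      show "meet w s = \<zero>" using w s by (simp add: annihilator_def)
    qed (use c wC sC in auto)
    hence cw: "c \<ominus> w = c" using diff_eq_self_if_disjoint c wC by simp
    show "meet u s = \<zero>" unfolding c_def[symmetric]
    proof (rule le_zero_if_le_disjoint[of _ "u \<ominus> w" s])
      show "c \<preceq> u \<ominus> w" using diff_mono[of c u w] c u wC cw by simp
      show "meet (u \<ominus> w) s = \<zero>" using uw s by (simp add: annihilator_def)
    qed (use c u wC sC in auto)
  qed
qed

lemma meet_ne_zero_if_subdir_irr:
  assumes si: "subdir_irr X" and x: "x \<in> acarr X" "x \<noteq> \<zero>" and y: "y \<in> acarr X" "y \<noteq> \<zero>"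
  shows "meet x y \<noteq> \<zero>"
proof
  assume xy: "meet x y = \<zero>"
  define I J where "I = annihilator {y}" and "J = annihilator I"
  \<comment> \<open>The congruences of the ideals I \<ni> x and J \<ni> y are nontrivial but intersect
    trivially, so there is no monolith.\<close>
  have I: "ideal I" using ideal_annihilator[of "{y}"] y by (simp add: I_def)
  have J: "ideal J" using ideal_annihilator[of I] by (auto simp: I_def J_def annihilator_def)
  have "x \<in> I" using x y xy by (simp add: I_def annihilator_def)
  moreover have "y \<in> J"
    using y meet_commute by (auto simp: I_def J_def annihilator_def)
  ultimately have "(x, \<zero>) \<in> ideal_cong I" "(y, \<zero>) \<in> ideal_cong J"
    using I J x y by (auto simp: ideal_cong_def ideal_def)
  hence nontrivial: "ideal_cong I \<noteq> Id_on (acarr X)" "ideal_cong J \<noteq> Id_on (acarr X)"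
    using x y by auto
  obtain a b where ab: "a \<in> acarr X" "b \<in> acarr X" "a \<noteq> b"
    and monolith: "\<And>\<theta>. is_cong X \<theta> \<Longrightarrow> \<theta> \<noteq> Id_on (acarr X) \<Longrightarrow> (a, b) \<in> \<theta>"
    using si unfolding subdir_irr_def by blast
  have "(a, b) \<in> ideal_cong I" "(a, b) \<in> ideal_cong J"
    using monolith is_cong_ideal_cong I J nontrivial by blast+
  moreover have "z = \<zero>" if "z \<in> I" "z \<in> J" for z
    using that by (auto simp: J_def annihilator_def)
  ultimately show False
    using le_antisym[of a b] ab by (auto simp: ideal_cong_def)
qed

lemma finite_below_maxel:
  assumes fin: "finite (acarr X)" and x: "x \<in> acarr X"
  obtains m where "m \<in> maxel X" "x \<preceq> m"
proof -
  define R where "R = {(z, y). y \<in> acarr X \<and> z \<in> acarr X \<and> y \<preceq> z \<and> z \<noteq> y}"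
  have "trans R"
    unfolding R_def trans_def using le_trans le_antisym by blast
  hence "acyclic R"
    unfolding acyclic_def using le_antisym by (simp add: R_def)
  moreover have "finite R"
    by (rule finite_subset[of _ "acarr X \<times> acarr X"]) (auto simp: R_def fin)
  ultimately have "wf R" by (simp add: finite_acyclic_wf)
  moreover have "x \<in> {y \<in> acarr X. x \<preceq> y}" using x by simp
  ultimately obtain m where m: "m \<in> {y \<in> acarr X. x \<preceq> y}"
    and top: "\<And>z. (z, m) \<in> R \<Longrightarrow> z \<notin> {y \<in> acarr X. x \<preceq> y}"
    by (rule wfE_min) blast+
  have "m \<in> maxel X"
    unfolding maxel_def using m top le_trans[of x m] x by (auto simp: R_def)
  with m that show ?thesis by blast
qed

end

fun meet_trm :: "trm list \<Rightarrow> trm" where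
  "meet_trm [] = Zero"
| "meet_trm [t] = t"
| "meet_trm (t # u # ts) = Minus t (Minus t (meet_trm (u # ts)))"

definition diff_trms :: "nat \<Rightarrow> trm list" where
  "diff_trms k = [Minus (Var i) (Var j). i \<leftarrow> [0..<Suc k], j \<leftarrow> [0..<Suc k], i \<noteq> j]"

definition width_ident :: "nat \<Rightarrow> ident" where
  "width_ident k = (meet_trm (diff_trms k), Zero)"

lemma Minus_in_diff_trms_iff:
  "Minus (Var i) (Var j) \<in> set (diff_trms k) \<longleftrightarrow> i \<le> k \<and> j \<le> k \<and> i \<noteq> j"
  by (auto simp: diff_trms_def)

lemma in_diff_trmsE:
  assumes "t \<in> set (diff_trms k)"
  obtains i j where "i \<le> k" "j \<le> k" "i \<noteq> j" "t = Minus (Var i) (Var j)"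
  using assms by (auto simp: diff_trms_def)

lemma diff_trms_ne_Nil: "1 \<le> k \<Longrightarrow> diff_trms k \<noteq> []"
  using Minus_in_diff_trms_iff[of 0 1 k] by auto

definition list_val :: "'a alg \<Rightarrow> 'a list \<Rightarrow> nat \<Rightarrow> 'a" where
  "list_val X ms i = (if i < length ms then ms ! i else azero X)"

lemma eval_restrict [simp]: "eval (X\<lparr>acarr := D\<rparr>) v t = eval X v t"
  by (induction t) simp_all

context cBCK_alg
begin

lemma eval_closed: "(\<And>i. v i \<in> acarr X) \<Longrightarrow> eval X v t \<in> acarr X"
  by (induction t) auto

lemma eval_meet_trm_le:
  assumes v: "\<And>i. v i \<in> acarr X" and "t \<in> set ts"
  shows "eval X v (meet_trm ts) \<preceq> eval X v t"
  using assms(2)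
proof (induction ts rule: meet_trm.induct)
  case (3 t1 u ts)
  show ?case
  proof (cases "t = t1")
    case False
    with 3 have "eval X v (meet_trm (u # ts)) \<preceq> eval X v t" by auto
    thus ?thesis
      using le_trans[OF _ _ _ meet_le_right] eval_closed[OF v] by simp
  qed (simp add: eval_closed[OF v])
qed (simp_all add: eval_closed[OF v])

lemma eval_meet_trm_ne_zero:
  assumes si: "subdir_irr X" and v: "\<And>i. v i \<in> acarr X"
    and "\<And>t. t \<in> set ts \<Longrightarrow> eval X v t \<noteq> \<zero>" and "ts \<noteq> []"
  shows "eval X v (meet_trm ts) \<noteq> \<zero>"
  using assms(3,4)
proof (induction ts rule: meet_trm.induct)
  case (3 t1 u ts)
  then show ?case
    using meet_ne_zero_if_subdir_irr[OF si eval_closed[OF v] _ eval_closed[OF v]] by simp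
qed simp_all

text \<open>Pigeonhole: two of the k + 1 values lie below a common maximal element, and their two
  differences are then disjoint.\<close>
lemma sat_width_ident:
  assumes fin: "finite M" and M: "M \<subseteq> acarr X" and card: "card M \<le> k"
    and below: "\<And>x. x \<in> acarr X \<Longrightarrow> \<exists>m\<in>M. x \<preceq> m"
  shows "sat_id X (width_ident k)"
  unfolding sat_id_def width_ident_def fst_conv snd_conv eval.simps
proof (intro allI impI)
  fix v :: "nat \<Rightarrow> 'a" assume "\<forall>i. v i \<in> acarr X"
  hence v: "\<And>i. v i \<in> acarr X" by blast
  obtain g where g: "\<And>i. g i \<in> M" "\<And>i. v i \<preceq> g i"
    using below[OF v] by metis
  have "\<not> inj_on g {0..k}"
    using card_inj_on_le[of g "{0..k}" M] fin card g by auto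
  then obtain i j where ij: "i \<le> k" "j \<le> k" "i \<noteq> j" "g i = g j"
    unfolding inj_on_def by auto
  show "eval X v (meet_trm (diff_trms k)) = \<zero>"
  proof (rule le_zero_if_le_disjoint)
    show "eval X v (meet_trm (diff_trms k)) \<preceq> v i \<ominus> v j"
      using eval_meet_trm_le[where v = v, OF v, of "Minus (Var i) (Var j)"]
        Minus_in_diff_trms_iff ij by simp
    show "eval X v (meet_trm (diff_trms k)) \<preceq> v j \<ominus> v i"
      using eval_meet_trm_le[where v = v, OF v, of "Minus (Var j) (Var i)"]
        Minus_in_diff_trms_iff ij by simp
    show "meet (v i \<ominus> v j) (v j \<ominus> v i) = \<zero>"
      using meet_diffs_below[of "v i" "v j" "g i"] v g[of i] g[of j] M ij by auto
  qed (use v eval_closed in auto)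
qed

lemma finite_sat_width_ident:
  assumes fin: "finite (acarr X)" and "card (maxel X) \<le> k"
  shows "sat_id X (width_ident k)"
proof (rule sat_width_ident)
  show "finite (maxel X)" "maxel X \<subseteq> acarr X" using fin by (auto simp: maxel_def)
  show "\<exists>m\<in>maxel X. x \<preceq> m" if "x \<in> acarr X" for x
    using finite_below_maxel[OF fin that] by blast
qed fact

lemma card_maxel_pos:
  assumes fin: "finite (acarr X)"
  shows "0 < card (maxel X)"
proof -
  obtain m where "m \<in> maxel X" using finite_below_maxel[OF fin zero_closed] by blast
  with fin show ?thesis by (auto simp: card_gt_0_iff maxel_def)
qed

lemma not_sat_width_ident:
  assumes si: "subdir_irr X" and k: "1 \<le> k" and D: "D \<subseteq> acarr X" "\<zero> \<in> D"
    and ms: "distinct ms" "length ms = Suc k" "set ms \<subseteq> maxel X" "set ms \<subseteq> D"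
  shows "\<not> sat_id (X\<lparr>acarr := D\<rparr>) (width_ident k)"
proof
  assume sat: "sat_id (X\<lparr>acarr := D\<rparr>) (width_ident k)"
  define v where "v = list_val X ms"
  have vD: "v i \<in> D" for i using ms D by (auto simp: v_def list_val_def)
  hence vC: "v i \<in> acarr X" for i using D by auto
  have "eval (X\<lparr>acarr := D\<rparr>) v (meet_trm (diff_trms k)) = \<zero>"
    using sat vD unfolding sat_id_def width_ident_def by simp
  moreover have "eval X v (meet_trm (diff_trms k)) \<noteq> \<zero>"
  proof (rule eval_meet_trm_ne_zero[OF si vC _ diff_trms_ne_Nil[OF k]])
    fix t assume "t \<in> set (diff_trms k)"
    then obtain i j where ij: "i \<le> k" "j \<le> k" "i \<noteq> j" and t: "t = Minus (Var i) (Var j)"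
      by (elim in_diff_trmsE)
    with ms have ij_len: "i < length ms" "j < length ms" by auto
    with ms have "ms ! i \<in> maxel X" "ms ! j \<in> maxel X" "ms ! i \<noteq> ms ! j"
      using ij nth_mem[of _ ms] by (auto simp: nth_eq_iff_index_eq)
    thus "eval X v t \<noteq> \<zero>"
      using ij_len t by (auto simp: v_def list_val_def maxel_def)
  qed
  ultimately show False by simp
qed

end

definition subuniverse :: "'a alg \<Rightarrow> 'a set \<Rightarrow> bool" where
  "subuniverse X D \<longleftrightarrow> D \<subseteq> acarr X \<and> azero X \<in> D \<and> (\<forall>x\<in>D. \<forall>y\<in>D. aminus X x y \<in> D)"

definition generated :: "'a alg \<Rightarrow> 'a list \<Rightarrow> 'a set" where
  "generated X ms = range (eval X (list_val X ms))"

instance trm :: countable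
  by countable_datatype

lemma in_var_restrict:
  assumes "in_var X \<Sigma>" "subuniverse X D"
  shows "in_var (X\<lparr>acarr := D\<rparr>) \<Sigma>"
proof -
  have "sat_id (X\<lparr>acarr := D\<rparr>) e" if "sat_id X e" for e
    using that assms(2) unfolding sat_id_def subuniverse_def by (simp add: subset_iff)
  with assms show ?thesis
    unfolding in_var_def is_alg_def subuniverse_def by simp
qed

lemma is_cBCK_restrict:
  assumes "is_cBCK X" "subuniverse X D"
  shows "is_cBCK (X\<lparr>acarr := D\<rparr>)"
proof -
  have "\<And>x. x \<in> D \<Longrightarrow> x \<in> acarr X" using assms(2) by (auto simp: subuniverse_def)
  with assms show ?thesis
    unfolding is_cBCK_def is_BCK_def is_alg_def subuniverse_def by simp
qed

lemma is_cBCK_restrict_if_embedding: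
  assumes "is_cBCK Y" "subuniverse X D" "inj_on g D" "g ` D \<subseteq> acarr Y"
    and hom: "\<And>x y. x \<in> D \<Longrightarrow> y \<in> D \<Longrightarrow> g (aminus X x y) = aminus Y (g x) (g y)"
    and hom_zero: "g (azero X) = azero Y"
  shows "is_cBCK (X\<lparr>acarr := D\<rparr>)"
proof -
  interpret Y: cBCK_alg Y by (rule cBCK_alg.intro) fact
  have D: "azero X \<in> D" "\<And>x y. x \<in> D \<Longrightarrow> y \<in> D \<Longrightarrow> aminus X x y \<in> D"
    using assms(2) by (auto simp: subuniverse_def)
  have gD: "\<And>x. x \<in> D \<Longrightarrow> g x \<in> acarr Y" using assms(4) by blast
  have eq: "a = b" if "a \<in> D" "b \<in> D" "g a = g b" for a b
    using assms(3) that by (auto dest: inj_onD)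
  have "aminus X (aminus X (aminus X x y) (aminus X x z)) (aminus X z y) = azero X"
    if "x \<in> D" "y \<in> D" "z \<in> D" for x y z
    by (rule eq) (use that D hom hom_zero gD Y.diff_diff_le in auto)
  moreover have "aminus X x (azero X) = x" "aminus X (azero X) x = azero X" if "x \<in> D" for x
    by (rule eq; use that D hom hom_zero gD in simp)+
  moreover have "x = y"
    if "x \<in> D" "y \<in> D" "aminus X x y = azero X" "aminus X y x = azero X" for x y
  proof (rule eq)
    have "aminus Y (g x) (g y) = azero Y" "aminus Y (g y) (g x) = azero Y"
      using that hom hom_zero by metis+
    thus "g x = g y" using Y.le_antisym gD that by blast
  qed (use that in auto)
  moreover have "aminus X x (aminus X x y) = aminus X y (aminus X y x)" if "x \<in> D" "y \<in> D" for x y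
    by (rule eq) (use that D hom gD Y.meet_commute in auto)
  ultimately show ?thesis
    unfolding is_cBCK_def is_BCK_def is_alg_def using D by simp
qed

lemma subuniverse_generated:
  assumes "is_alg X" "set ms \<subseteq> acarr X"
  shows "subuniverse X (generated X ms)"
proof -
  have "eval X (list_val X ms) t \<in> acarr X" for t
    by (induction t) (use assms in \<open>auto simp: list_val_def is_alg_def\<close>)
  moreover have "azero X = eval X (list_val X ms) Zero" by simp
  moreover have "aminus X (eval X (list_val X ms) s) (eval X (list_val X ms) t) =
      eval X (list_val X ms) (Minus s t)" for s t
    by simp
  ultimately show ?thesis
    unfolding subuniverse_def generated_def by blast
qed

lemma set_subset_generated: "set ms \<subseteq> generated X ms"
proof
  fix m assume "m \<in> set ms"
  then obtain i where "i < length ms" "m = ms ! i" by (auto simp: in_set_conv_nth)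
  thus "m \<in> generated X ms"
    unfolding generated_def by (intro range_eqI[of _ _ "Var i"]) (simp add: list_val_def)
qed

lemma countable_generated: "countable (generated X ms)"
  by (simp add: generated_def)

lemma (in cBCK_alg) generated_below:
  assumes ms: "set ms \<subseteq> acarr X" "ms \<noteq> []" and d: "d \<in> generated X ms"
  shows "\<exists>m\<in>set ms. d \<preceq> m"
proof -
  have v: "list_val X ms i \<in> acarr X" for i
    using ms by (auto simp: list_val_def)
  have hd_ms: "hd ms \<in> set ms" "hd ms \<in> acarr X" using ms by auto
  have E: "eval X (list_val X ms) t \<in> acarr X" for t
    using eval_closed v by blast
  have "\<exists>m\<in>set ms. eval X (list_val X ms) t \<preceq> m" for t
  proof (induction t)
    case (Var i)
    show ?case
    proof (cases "i < length ms")
      case True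
      with ms show ?thesis using nth_mem by (force simp: list_val_def)
    qed (use hd_ms in \<open>auto simp: list_val_def intro!: bexI[of _ "hd ms"]\<close>)
  next
    case Zero
    with hd_ms show ?case by (auto intro!: bexI[of _ "hd ms"])
  next
    case (Minus s t)
    then obtain m where m: "m \<in> set ms" "eval X (list_val X ms) s \<preceq> m" by blast
    have "eval X (list_val X ms) (Minus s t) \<preceq> m"
      using le_trans[OF _ _ _ _ m(2)] E m(1) ms(1) by auto
    with m(1) show ?case ..
  qed
  with d show ?thesis by (auto simp: generated_def)
qed

text \<open>Inclusions of varieties are tested on algebras carried by nat, so countable
  subalgebras are transported to nat along \<^const>\<open>to_nat_on\<close>.\<close>
definition nat_copy :: "'a alg \<Rightarrow> 'a set \<Rightarrow> nat alg" where
  "nat_copy X D =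
    \<lparr>acarr = to_nat_on D ` D,
     aminus = (\<lambda>a b. to_nat_on D (aminus X (from_nat_into D a) (from_nat_into D b))),
     azero = to_nat_on D (azero X)\<rparr>"

lemma acarr_nat_copy [simp]: "acarr (nat_copy X D) = to_nat_on D ` D"
  and azero_nat_copy [simp]: "azero (nat_copy X D) = to_nat_on D (azero X)"
  by (simp_all add: nat_copy_def)

context
  fixes X :: "'a alg" and D :: "'a set"
  assumes countable: "countable D" and sub: "subuniverse X D"
begin

private lemma D_closed: "azero X \<in> D" "x \<in> D \<Longrightarrow> y \<in> D \<Longrightarrow> aminus X x y \<in> D"
  using sub by (auto simp: subuniverse_def)

private lemma to_nat_on_hom: "x \<in> D \<Longrightarrow> y \<in> D \<Longrightarrow>
    aminus (nat_copy X D) (to_nat_on D x) (to_nat_on D y) = to_nat_on D (aminus X x y)"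
  by (simp add: nat_copy_def countable)

lemma eval_nat_copy:
  assumes v: "\<And>i. v i \<in> D"
  shows "eval X v t \<in> D \<and> eval (nat_copy X D) (to_nat_on D \<circ> v) t = to_nat_on D (eval X v t)"
proof (induction t)
  case (Minus s t)
  thus ?case using D_closed(2) to_nat_on_hom by simp
qed (simp_all add: v D_closed)

lemma is_alg_nat_copy: "is_alg (nat_copy X D)"
  unfolding is_alg_def
proof (intro conjI ballI)
  show "azero (nat_copy X D) \<in> acarr (nat_copy X D)"
    using D_closed by simp
  fix a b assume "a \<in> acarr (nat_copy X D)" "b \<in> acarr (nat_copy X D)"
  then obtain x y where "x \<in> D" "y \<in> D" "a = to_nat_on D x" "b = to_nat_on D y"
    by auto
  thus "aminus (nat_copy X D) a b \<in> acarr (nat_copy X D)"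
    using to_nat_on_hom[of x y] D_closed(2)[of x y] by simp
qed

lemma sat_id_nat_copy_iff: "sat_id (nat_copy X D) e \<longleftrightarrow> sat_id (X\<lparr>acarr := D\<rparr>) e"
proof
  assume sat: "sat_id (nat_copy X D) e"
  show "sat_id (X\<lparr>acarr := D\<rparr>) e" unfolding sat_id_def
  proof (intro allI impI)
    fix v :: "nat \<Rightarrow> 'a" assume "\<forall>i. v i \<in> acarr (X\<lparr>acarr := D\<rparr>)"
    hence v: "\<And>i. v i \<in> D" by simp
    hence "\<forall>i. (to_nat_on D \<circ> v) i \<in> acarr (nat_copy X D)" by simp
    with sat have "eval (nat_copy X D) (to_nat_on D \<circ> v) (fst e) =
        eval (nat_copy X D) (to_nat_on D \<circ> v) (snd e)"
      unfolding sat_id_def by blast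
    thus "eval (X\<lparr>acarr := D\<rparr>) v (fst e) = eval (X\<lparr>acarr := D\<rparr>) v (snd e)"
      using eval_nat_copy[where v = v, OF v] countable by simp
  qed
next
  assume sat: "sat_id (X\<lparr>acarr := D\<rparr>) e"
  show "sat_id (nat_copy X D) e" unfolding sat_id_def
  proof (intro allI impI)
    fix w :: "nat \<Rightarrow> nat" assume w: "\<forall>i. w i \<in> acarr (nat_copy X D)"
    define v where "v = from_nat_into D \<circ> w"
    have v: "\<And>i. v i \<in> D"
      using w by (force simp: v_def intro: from_nat_into)
    have wv: "w = to_nat_on D \<circ> v"
      using w by (simp add: v_def fun_eq_iff)
    have "eval X v (fst e) = eval X v (snd e)"
      using sat v by (simp add: sat_id_def)
    thus "eval (nat_copy X D) w (fst e) = eval (nat_copy X D) w (snd e)"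
      using eval_nat_copy[where v = v, OF v] wv by simp
  qed
qed

lemma is_cBCK_restrict_if_nat_copy:
  assumes "is_cBCK (nat_copy X D)"
  shows "is_cBCK (X\<lparr>acarr := D\<rparr>)"
  by (rule is_cBCK_restrict_if_embedding[OF assms sub]) (use countable to_nat_on_hom D_closed in auto)

end

lemma is_cBCK_if_in_cBCK_variety:
  assumes B: "in_var B \<Sigma>" and \<Sigma>: "cBCK_variety \<Sigma>"
  shows "is_cBCK B"
proof -
  have alg: "is_alg B" using B by (simp add: in_var_def)
  have generated_cBCK: "is_cBCK (B\<lparr>acarr := generated B [x, y, z]\<rparr>) \<and> {x, y, z} \<subseteq> generated B [x, y, z]"
    if "x \<in> acarr B" "y \<in> acarr B" "z \<in> acarr B" for x y z
  proof -
    let ?D = "generated B [x, y, z]"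
    have sub: "subuniverse B ?D"
      using subuniverse_generated[OF alg] that by simp
    have "in_var (nat_copy B ?D) \<Sigma>"
      using is_alg_nat_copy[OF countable_generated sub] in_var_restrict[OF B sub]
        sat_id_nat_copy_iff[OF countable_generated sub] by (simp add: in_var_def)
    hence "is_cBCK (nat_copy B ?D)" using \<Sigma> by (simp add: cBCK_variety_def)
    thus ?thesis
      using is_cBCK_restrict_if_nat_copy[OF countable_generated sub] set_subset_generated[of "[x, y, z]" B]
      by simp
  qed
  show ?thesis unfolding is_cBCK_def is_BCK_def
  proof (intro conjI ballI impI alg)
    fix x y z assume "x \<in> acarr B" "y \<in> acarr B" "z \<in> acarr B"
    from generated_cBCK[OF this] show "aminus B (aminus B (aminus B x y) (aminus B x z)) (aminus B z y) = azero B"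
      unfolding is_cBCK_def is_BCK_def by simp
  next
    fix x assume x: "x \<in> acarr B"
    from generated_cBCK[OF x x x] show "aminus B x (azero B) = x" "aminus B (azero B) x = azero B"
      unfolding is_cBCK_def is_BCK_def by simp_all
  next
    fix x y assume "x \<in> acarr B" "y \<in> acarr B" "aminus B x y = azero B" "aminus B y x = azero B"
    with generated_cBCK[of x y y] show "x = y" unfolding is_cBCK_def is_BCK_def by simp
  next
    fix x y assume "x \<in> acarr B" "y \<in> acarr B"
    from generated_cBCK[OF this(1,2,2)] show "aminus B x (aminus B x y) = aminus B y (aminus B y x)"
      unfolding is_cBCK_def by simp
  qed
qed

lemma (in cBCK_alg) nat_model_of_width:
  assumes X: "in_var X \<Sigma>" and si: "subdir_irr X" and k: "1 \<le> k"
    and ms: "distinct ms" "length ms = Suc k" "set ms \<subseteq> maxel X"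
  obtains Y :: "nat alg"
  where "in_var Y \<Sigma>" "sat_id Y (width_ident (Suc k))" "\<not> sat_id Y (width_ident k)"
proof
  let ?D = "generated X ms"
  have ms_carr: "set ms \<subseteq> acarr X" using ms(3) by (auto simp: maxel_def)
  have sub: "subuniverse X ?D"
    using cBCK ms_carr by (simp add: subuniverse_generated is_cBCK_def is_BCK_def)
  note copy_iff = sat_id_nat_copy_iff[OF countable_generated sub]
  show "in_var (nat_copy X ?D) \<Sigma>"
    using is_alg_nat_copy[OF countable_generated sub] in_var_restrict[OF X sub] copy_iff
    by (simp add: in_var_def)
  interpret D: cBCK_alg "X\<lparr>acarr := ?D\<rparr>"
    using is_cBCK_restrict[OF cBCK sub] by (rule cBCK_alg.intro)
  have "sat_id (X\<lparr>acarr := ?D\<rparr>) (width_ident (Suc k))"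
  proof (rule D.sat_width_ident)
    show "card (set ms) \<le> Suc k" using distinct_card[OF ms(1)] ms(2) by simp
    show "\<exists>m\<in>set ms. aminus (X\<lparr>acarr := ?D\<rparr>) x m = azero (X\<lparr>acarr := ?D\<rparr>)"
      if "x \<in> acarr (X\<lparr>acarr := ?D\<rparr>)" for x
      using generated_below[OF ms_carr] that ms(2) by (simp add: length_greater_0_conv[symmetric])
  qed (use set_subset_generated[of ms X] in auto)
  thus "sat_id (nat_copy X ?D) (width_ident (Suc k))" using copy_iff by simp
  show "\<not> sat_id (nat_copy X ?D) (width_ident k)"
    using not_sat_width_ident[OF si k _ _ ms] sub set_subset_generated[of ms X] copy_iff
    by (simp add: subuniverse_def)
qed

lemma var_less_insert_ident:
  fixes Y1 Y2 :: "nat alg"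
  assumes le: "var_le \<Sigma> \<Sigma>K" and e: "e \<in> \<Sigma>"
    and Y1: "in_var Y1 \<Sigma>K" "sat_id Y1 e" "\<not> in_var Y1 \<Sigma>"
    and Y2: "in_var Y2 \<Sigma>K" "\<not> sat_id Y2 e"
  shows "var_less \<Sigma> (insert e \<Sigma>K)" "var_less (insert e \<Sigma>K) \<Sigma>K"
proof -
  have "var_le \<Sigma> (insert e \<Sigma>K)"
    using le e by (auto simp: var_le_def in_var_def)
  moreover have "in_var Y1 (insert e \<Sigma>K)" "\<not> in_var Y2 (insert e \<Sigma>K)"
    using Y1 Y2 by (auto simp: in_var_def)
  moreover have "var_le (insert e \<Sigma>K) \<Sigma>K"
    by (auto simp: var_le_def in_var_def)
  ultimately show "var_less \<Sigma> (insert e \<Sigma>K)" "var_less (insert e \<Sigma>K) \<Sigma>K"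
    using Y1(3) Y2(1) by (auto simp: var_less_def var_le_def)
qed

lemma obtain_distinct_list:
  assumes "infinite S \<or> n \<le> card S"
  obtains xs where "distinct xs" "length xs = n" "set xs \<subseteq> S"
proof -
  obtain T where T: "T \<subseteq> S" "finite T" "card T = n"
  proof (cases "finite S")
    case True
    with assms show ?thesis using obtain_subset_with_card_n that by blast
  next
    case False
    with that show ?thesis using infinite_arbitrarily_large by blast
  qed
  obtain xs where "set xs = T" "distinct xs"
    using finite_distinct_list[OF T(2)] by blast
  with T that show ?thesis using distinct_card by fastforce
qed

theorem mainTheorem7:
  fixes A :: "'a alg" and B :: "'b alg" and \<Sigma>K :: "ident set"
  assumes "is_cBCK A" and "finite (acarr A)" and "subdir_irr A"
    and "\<not> is_chain A"
    and "is_cover \<Sigma>K (Id_alg A)"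
    and "in_var B \<Sigma>K" and "subdir_irr B"
  shows "finite (maxel B) \<and> card (maxel B) \<le> card (maxel A) + 1"
proof (rule ccontr)
  assume many: "\<not> ?thesis"
  interpret A: cBCK_alg A by (rule cBCK_alg.intro) fact
  define n where "n = card (maxel A)"
  have cover: "var_le (Id_alg A) \<Sigma>K" "\<not> (\<exists>\<Sigma>. var_less (Id_alg A) \<Sigma> \<and> var_less \<Sigma> \<Sigma>K)"
    and "cBCK_variety \<Sigma>K"
    using assms(5) by (auto simp: is_cover_def var_less_def)
  interpret B: cBCK_alg B
    by (rule cBCK_alg.intro, rule is_cBCK_if_in_cBCK_variety) fact+
  obtain ms where ms: "distinct ms" "length ms = Suc (Suc n)" "set ms \<subseteq> maxel B"
    using obtain_distinct_list[of "maxel B" "Suc (Suc n)"] many by (force simp: n_def)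
  have "1 \<le> n" "1 \<le> Suc n" using A.card_maxel_pos[OF assms(2)] by (simp_all add: n_def)
  obtain Y2 :: "nat alg" where Y2: "in_var Y2 \<Sigma>K" "\<not> sat_id Y2 (width_ident (Suc n))"
    using B.nat_model_of_width[OF assms(6,7) \<open>1 \<le> Suc n\<close> ms] by blast
  obtain Y1 :: "nat alg"
    where Y1: "in_var Y1 \<Sigma>K" "sat_id Y1 (width_ident (Suc n))" "\<not> sat_id Y1 (width_ident n)"
    by (rule B.nat_model_of_width[OF assms(6,7) \<open>1 \<le> n\<close>, of "take (Suc n) ms"])
      (use ms set_take_subset[of "Suc n" ms] in auto)
  have "\<not> in_var Y1 (Id_alg A)"
    using Y1(3) A.finite_sat_width_ident[OF assms(2), of n]
    unfolding in_var_def Id_alg_def n_def by blast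
  moreover have "width_ident (Suc n) \<in> Id_alg A"
    using A.finite_sat_width_ident[OF assms(2)] by (simp add: Id_alg_def n_def)
  ultimately show False
    using var_less_insert_ident[OF cover(1) _ Y1(1,2) _ Y2] cover(2) by blast
qed

end
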